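(* Let $f,h:\mathbb{R}\to\mathbb{R}$ be continuous, with $f$ positive and nondecreasing and $h$ nonnegative and nonincreasing. For $a\in\mathbb{R}$ set $$\mathcal{R}(a)=\int_a^{+\infty}\frac{dt}{\left(\int_a^te^{-2\int_s^th(r)\,dr}f(s)\,ds\right)^{1/2}}\in(0,+\infty].$$ Then either $\mathcal{R}(a)=+\infty$ for every $a\in\mathbb{R}$, or $\mathcal{R}(a)<+\infty$ for every $a\in\mathbb{R}$. In the latter case $\mathcal{R}:\mathbb{R}\to(0,+\infty)$ is monotone nonincreasing and $\lim_{a\to+\infty}\mathcal{R}(a)=0$. *)

theory Defs
  imports "HOL-Analysis.Analysis"
begin

text \<open>Inner quantity: int_a^t exp(-2 int_s^t h(r) dr) f(s) ds (Henstock-Kurzweil integral,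
  coinciding with the Riemann integral for continuous data).\<close>
definition inner_int :: "(real \<Rightarrow> real) \<Rightarrow> (real \<Rightarrow> real) \<Rightarrow> real \<Rightarrow> real \<Rightarrow> real" where
  "inner_int f h a t = integral {a..t} (\<lambda>s. exp (- 2 * integral {s..t} h) * f s)"

definition calR :: "(real \<Rightarrow> real) \<Rightarrow> (real \<Rightarrow> real) \<Rightarrow> real \<Rightarrow> ennreal" where
  "calR f h a = (\<integral>\<^sup>+ t \<in> {a<..}. ennreal (1 / sqrt (inner_int f h a t)) \<partial>lborel)"

end

theory Submission
  imports Defs
begin

text \<open>Write F_a(t) for the inner integral. Since h \<ge> 0 is nonincreasing and f > 0 is
  nondecreasing, exp(-2 h(a) (t - a)) f(a) (t - a) \<le> F_a(t) \<le> f(t) (t - a).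
  Substituting t = a + \<tau>, the integrand of calR(a) becomes F_a(a + \<tau>)^(-1/2), and
  F_a(a + \<tau>) is nondecreasing in a, so calR is nonincreasing. For a < b, the lower bound makes
  the integrand of calR(a) integrable on (a, b], and beyond b it is dominated by that of calR(b)
  because F_a \<ge> F_b there; hence calR is finite everywhere or nowhere. A bound f \<le> M gives
  F_a(t) \<le> M (t - a) and calR = \<infinity>. So when calR is finite, f is unbounded, the shifted
  integrands tend to 0 pointwise as a \<rightarrow> \<infinity>, and monotone convergence gives calR(a) \<rightarrow> 0.\<close>

lemma continuous_on_atLeast_if_continuous_on_Icc:
  fixes g :: "real \<Rightarrow> 'b::topological_space"
  assumes "\<And>b. continuous_on {a..b} g"
  shows "continuous_on {a..} g"
  unfolding continuous_on_eq_continuous_within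
proof
  fix x assume x: "x \<in> {a..}"
  have "continuous (at x within {a..x+1}) g"
    using assms[of "x+1"] x by (simp add: continuous_on_eq_continuous_within)
  moreover have "at x within {a..} = at x within {a..x+1}"
    by (rule at_within_nhd[of x "{..<x+1}"]) auto
  ultimately show "continuous (at x within {a..}) g" by simp
qed

lemma continuous_on_shift:
  fixes g :: "real \<Rightarrow> 'b::topological_space"
  assumes "continuous_on UNIV g"
  shows "continuous_on UNIV (\<lambda>r. g (r + c))"
  by (rule continuous_on_compose2[OF assms _ subset_UNIV]) (intro continuous_intros)

lemma one_div_sqrt_antimono: "0 < (x::real) \<Longrightarrow> x \<le> y \<Longrightarrow> 1 / sqrt y \<le> 1 / sqrt x"
  by (intro divide_left_mono) (auto intro: mult_pos_pos)

lemma powr_minus_half: "0 < (x::real) \<Longrightarrow> x powr (-1/2) = 1 / sqrt x"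
  by (metis less_eq_real_def minus_divide_left powr_half_sqrt powr_minus_divide)

lemma ennreal_eq_top_if_of_nat_le:
  fixes x :: ennreal
  assumes "\<And>n. of_nat n \<le> x"
  shows "x = \<infinity>"
proof -
  have "(SUP n. of_nat n :: ennreal) \<le> x" by (rule SUP_least) (rule assms)
  then show ?thesis by (simp add: ennreal_SUP_of_nat_eq_top top_unique)
qed

lemma antimono_tendsto_0_if_INF_nat:
  fixes g :: "real \<Rightarrow> ennreal"
  assumes "antimono g" and "(INF n. g (real n)) = 0"
  shows "(g \<longlongrightarrow> 0) at_top"
proof (rule order_tendstoI)
  fix y :: ennreal assume "0 < y"
  then obtain n where n: "g (real n) < y" using assms(2) by (metis INF_less_iff)
  have "g a < y" if "real n \<le> a" for a
    using antimonoD[OF assms(1) that] n by (rule order.strict_trans1)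
  then show "eventually (\<lambda>a. g a < y) at_top"
    unfolding eventually_at_top_linorder by blast
qed simp

lemma continuous_on_inner_integrand:
  fixes f h :: "real \<Rightarrow> real"
  assumes "continuous_on UNIV f" and "continuous_on UNIV h"
  shows "continuous_on {a..t} (\<lambda>s. exp (- 2 * integral {s..t} h) * f s)"
  by (intro continuous_intros indefinite_integral_continuous_1' integrable_continuous_interval
      continuous_on_subset[OF assms(1)] continuous_on_subset[OF assms(2)]) auto

lemma integrable_inner_integrand:
  fixes f h :: "real \<Rightarrow> real"
  assumes "continuous_on UNIV f" and "continuous_on UNIV h"
  shows "(\<lambda>s. exp (- 2 * integral {s..t} h) * f s) integrable_on {a..t}"
  by (rule integrable_continuous_interval[OF continuous_on_inner_integrand[OF assms]])

lemma inner_int_empty: "t \<le> a \<Longrightarrow> inner_int f h a t = 0"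
  by (cases "t < a") (auto simp: inner_int_def)

lemma inner_int_shift:
  "inner_int f h a (a + \<tau>) = inner_int (\<lambda>r. f (r + a)) (\<lambda>r. h (r + a)) 0 \<tau>"
proof -
  have "inner_int f h a (a + \<tau>)
      = integral {a-a..a+\<tau>-a} (\<lambda>x. exp (- 2 * integral {x+a..a+\<tau>} h) * f (x+a))"
    unfolding inner_int_def by (rule integral_shift_real_ivl[symmetric])
  also have "\<dots> = inner_int (\<lambda>r. f (r + a)) (\<lambda>r. h (r + a)) 0 \<tau>"
    unfolding inner_int_def
    using integral_shift_real_ivl[of "x+a" a "a+\<tau>" h for x] by (simp add: add.commute)
  finally show ?thesis .
qed

lemma inner_int_mono:
  fixes f\<^sub>1 f\<^sub>2 h\<^sub>1 h\<^sub>2 :: "real \<Rightarrow> real"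
  assumes "continuous_on UNIV f\<^sub>1" "continuous_on UNIV f\<^sub>2"
    and "continuous_on UNIV h\<^sub>1" "continuous_on UNIV h\<^sub>2"
    and "\<And>x. x \<in> {a..t} \<Longrightarrow> 0 \<le> f\<^sub>1 x" "\<And>x. x \<in> {a..t} \<Longrightarrow> f\<^sub>1 x \<le> f\<^sub>2 x"
    and "\<And>x. x \<in> {a..t} \<Longrightarrow> h\<^sub>2 x \<le> h\<^sub>1 x"
  shows "inner_int f\<^sub>1 h\<^sub>1 a t \<le> inner_int f\<^sub>2 h\<^sub>2 a t"
  unfolding inner_int_def
proof (rule integral_le[OF integrable_inner_integrand integrable_inner_integrand])
  fix s assume s: "s \<in> {a..t}"
  have "integral {s..t} h\<^sub>2 \<le> integral {s..t} h\<^sub>1"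
    using s assms(7)
    by (intro integral_le integrable_continuous_interval continuous_on_subset[OF assms(3)]
        continuous_on_subset[OF assms(4)]) auto
  then show "exp (- 2 * integral {s..t} h\<^sub>1) * f\<^sub>1 s \<le> exp (- 2 * integral {s..t} h\<^sub>2) * f\<^sub>2 s"
    using s assms(5,6) by (intro mult_mono) auto
qed (use assms in auto)

lemma continuous_on_inner_int:
  fixes f h :: "real \<Rightarrow> real"
  assumes fc: "continuous_on UNIV f" and hc: "continuous_on UNIV h"
  shows "continuous_on {a..b} (inner_int f h a)"
proof -
  have h_int: "h integrable_on {c..d}" for c d
    by (rule integrable_continuous_interval[OF continuous_on_subset[OF hc]]) auto
  define I where "I = (\<lambda>t. integral {a..t} h)"
  define J where "J = (\<lambda>t. integral {a..t} (\<lambda>s. exp (2 * I s) * f s))"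
  have Ic: "continuous_on {a..b} I"
    unfolding I_def by (rule indefinite_integral_continuous_1[OF h_int])
  have Jc: "continuous_on {a..b} J"
    unfolding J_def
    by (rule indefinite_integral_continuous_1, rule integrable_continuous_interval)
       (intro continuous_intros Ic continuous_on_subset[OF fc]; auto)
  \<comment> \<open>The factorisation F_a(t) = exp(-2 I(t)) J(t) isolates the dependence of the integrand on t.\<close>
  have "exp (- 2 * I t) * J t = inner_int f h a t" if t: "t \<in> {a..b}" for t
  proof -
    have "exp (- 2 * integral {s..t} h) * f s = exp (- 2 * I t) * (exp (2 * I s) * f s)"
      if s: "s \<in> {a..t}" for s
    proof -
      have "I s + integral {s..t} h = I t"
        unfolding I_def using s by (intro Henstock_Kurzweil_Integration.integral_combine h_int) auto
      then have "integral {s..t} h = I t - I s" by simp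
      moreover have "exp (- 2 * (I t - I s)) = exp (- 2 * I t) * exp (2 * I s)"
        by (simp add: exp_add[symmetric] algebra_simps)
      ultimately show ?thesis by simp
    qed
    then have "inner_int f h a t = integral {a..t} (\<lambda>s. exp (- 2 * I t) * (exp (2 * I s) * f s))"
      unfolding inner_int_def by (rule integral_cong)
    also have "\<dots> = exp (- 2 * I t) * J t" unfolding J_def by (rule integral_mult_right)
    finally show ?thesis by simp
  qed
  with continuous_on_mult[OF continuous_on_exp[OF continuous_on_mult_left[OF Ic]] Jc]
  show ?thesis by (rule continuous_on_eq)
qed

lemma borel_measurable_inner_int:
  fixes f h :: "real \<Rightarrow> real"
  assumes "continuous_on UNIV f" and "continuous_on UNIV h"
  shows "inner_int f h a \<in> borel_measurable borel"
proof -
  have "(\<lambda>x. indicator {a..} x *\<^sub>R inner_int f h a x) \<in> borel_measurable borel"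
    by (intro borel_measurable_continuous_on_indicator continuous_on_atLeast_if_continuous_on_Icc
        continuous_on_inner_int[OF assms]) auto
  moreover have "(\<lambda>x. indicator {a..} x *\<^sub>R inner_int f h a x) = inner_int f h a"
    by (auto simp: fun_eq_iff indicator_def inner_int_empty)
  ultimately show ?thesis by simp
qed

lemma calR_shift:
  fixes f h :: "real \<Rightarrow> real"
  assumes "continuous_on UNIV f" and "continuous_on UNIV h"
  shows "calR f h a = calR (\<lambda>r. f (r + a)) (\<lambda>r. h (r + a)) 0"
proof -
  note borel_measurable_inner_int[OF assms, measurable]
  have "calR f h a = (\<integral>\<^sup>+ \<tau>. ennreal (1 / sqrt (inner_int f h a (a + 1 * \<tau>)))
      * indicator {a<..} (a + 1 * \<tau>) \<partial>lborel)"
    unfolding calR_def by (subst nn_integral_real_affine[of _ 1 a]) auto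
  then show ?thesis
    unfolding calR_def by (simp add: inner_int_shift indicator_def)
qed

lemma calR_lower_bound_on_interval:
  assumes "a \<le> x" "x \<le> y" "0 \<le> c"
    and "\<And>t. x < t \<Longrightarrow> t \<le> y \<Longrightarrow> c \<le> 1 / sqrt (inner_int f h a t)"
  shows "ennreal (c * (y - x)) \<le> calR f h a"
proof -
  have "ennreal (c * (y - x)) = (\<integral>\<^sup>+ t. ennreal c * indicator {x<..y} t \<partial>lborel)"
    using assms(2,3) by (simp add: nn_integral_cmult_indicator ennreal_mult)
  also have "\<dots> \<le> calR f h a"
    unfolding calR_def
    by (intro nn_integral_mono) (use assms in \<open>auto simp: indicator_def intro: ennreal_leI\<close>)
  finally show ?thesis .
qed

lemma nn_integral_powr_minus_half_finite:
  assumes "a \<le> b" and "0 \<le> c"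
  shows "(\<integral>\<^sup>+ t. ennreal (c * (t - a) powr (-1/2)) * indicator {a..b} t \<partial>lborel) < \<infinity>"
proof -
  have "((\<lambda>x. x powr (-1/2)) has_integral ((b-a) powr (1/2) / (1/2))) {0..b-a}"
    using has_integral_powr_from_0[of "-1/2" "b-a"] assms(1) by simp
  then have "((\<lambda>x. (x - a) powr (-1/2)) has_integral ((b-a) powr (1/2) / (1/2))) {a..b}"
    using has_integral_shift_real_ivl[of _ _ 0 "b-a" "-a"] by simp
  then show ?thesis
    by (subst nn_integral_has_integral_lebesgue'[OF _ has_integral_mult_right]) (use assms in auto)
qed

locale calR_hypotheses =
  fixes f h :: "real \<Rightarrow> real"
  assumes f_cont: "continuous_on UNIV f" and h_cont: "continuous_on UNIV h"
    and f_pos: "\<And>x. f x > 0" and f_mono: "mono f"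
    and h_nonneg: "\<And>x. h x \<ge> 0" and h_antimono: "antimono h"
begin

abbreviation F where "F \<equiv> inner_int f h"

lemma borel_measurable_F[measurable]: "F a \<in> borel_measurable borel"
  by (rule borel_measurable_inner_int[OF f_cont h_cont])

lemma integral_h_le: assumes "a \<le> s" "s \<le> t" shows "integral {s..t} h \<le> h a * (t - s)"
proof -
  have "integral {s..t} h \<le> integral {s..t} (\<lambda>_. h a)"
    using assms
    by (intro integral_le integrable_continuous_interval continuous_on_subset[OF h_cont])
       (auto intro: antimonoD[OF h_antimono])
  then show ?thesis using assms by (simp add: mult.commute)
qed

lemma inner_int_lower: assumes "a \<le> t"
  shows "exp (- 2 * h a * (t - a)) * f a * (t - a) \<le> F a t"
proof -
  have "integral {a..t} (\<lambda>_. exp (- 2 * h a * (t - a)) * f a) \<le> F a t"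
    unfolding inner_int_def
  proof (rule integral_le[OF _ integrable_inner_integrand[OF f_cont h_cont]])
    fix s assume s: "s \<in> {a..t}"
    have "integral {s..t} h \<le> h a * (t - s)" using integral_h_le s by auto
    also have "\<dots> \<le> h a * (t - a)" using s h_nonneg[of a] by (intro mult_left_mono) auto
    finally show "exp (- 2 * h a * (t - a)) * f a \<le> exp (- 2 * integral {s..t} h) * f s"
      using s f_pos[of a] monoD[OF f_mono, of a s] by (intro mult_mono) auto
  qed (rule integrable_const_ivl)
  then show ?thesis using assms by (simp add: mult_ac)
qed

lemma inner_int_upper: assumes "a \<le> t" shows "F a t \<le> f t * (t - a)"
proof -
  have "F a t \<le> integral {a..t} (\<lambda>_. f t)"
    unfolding inner_int_def
  proof (rule integral_le[OF integrable_inner_integrand[OF f_cont h_cont]])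
    fix s assume s: "s \<in> {a..t}"
    have "0 \<le> integral {s..t} h"
      using h_nonneg
      by (intro Henstock_Kurzweil_Integration.integral_nonneg integrable_continuous_interval
          continuous_on_subset[OF h_cont]) auto
    then have "exp (- 2 * integral {s..t} h) * f s \<le> 1 * f s"
      using f_pos[of s] by (intro mult_right_mono) auto
    also have "\<dots> \<le> f t" using s monoD[OF f_mono, of s t] by simp
    finally show "exp (- 2 * integral {s..t} h) * f s \<le> f t" .
  qed (rule integrable_const_ivl)
  then show ?thesis using assms by (simp add: mult.commute)
qed

lemma inner_int_pos: assumes "a < t" shows "0 < F a t"
  using inner_int_lower[of a t] assms f_pos[of a]
  by (smt (verit) exp_gt_zero mult_pos_pos)

lemma inner_int_antimono_left: assumes "a \<le> b" "b \<le> t" shows "F b t \<le> F a t"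
proof -
  let ?g = "\<lambda>s. exp (- 2 * integral {s..t} h) * f s"
  have "integral {a..b} ?g + F b t = F a t"
    unfolding inner_int_def
    by (rule Henstock_Kurzweil_Integration.integral_combine[OF assms
          integrable_inner_integrand[OF f_cont h_cont]])
  moreover have "0 \<le> integral {a..b} ?g"
    using assms f_pos
    by (intro Henstock_Kurzweil_Integration.integral_nonneg integrable_on_subinterval[OF
          integrable_inner_integrand[OF f_cont h_cont, of t a]]) (auto intro: less_imp_le)
  ultimately show ?thesis by linarith
qed

lemma inner_int_shift_mono: assumes "a \<le> b" shows "F a (a + \<tau>) \<le> F b (b + \<tau>)"
  unfolding inner_int_shift using assms
  by (intro inner_int_mono continuous_on_shift f_cont h_cont f_pos[THEN less_imp_le]
      monoD[OF f_mono] antimonoD[OF h_antimono]) auto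

lemma calR_antimono: "antimono (calR f h)"
proof (rule antimonoI)
  fix a b :: real assume ab: "a \<le> b"
  have "1 / sqrt (F b (b + \<tau>)) \<le> 1 / sqrt (F a (a + \<tau>))" if "0 < \<tau>" for \<tau>
    using that inner_int_pos[of a "a + \<tau>"] inner_int_shift_mono[OF ab]
    by (intro one_div_sqrt_antimono) auto
  then show "calR f h b \<le> calR f h a"
    unfolding calR_shift[OF f_cont h_cont, of a] calR_shift[OF f_cont h_cont, of b]
    unfolding calR_def inner_int_shift[symmetric]
    by (intro nn_integral_mono) (auto simp: indicator_def intro: ennreal_leI)
qed

lemma calR_pos: "0 < calR f h a"
proof -
  have "1 / sqrt (f (a + 1)) \<le> 1 / sqrt (F a t)" if "a < t" "t \<le> a + 1" for t
  proof -
    have "F a t \<le> f t * (t - a)" using inner_int_upper[of a t] that by simp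
    also have "\<dots> \<le> f (a + 1) * 1"
      using that f_pos[of t] monoD[OF f_mono, of t "a + 1"] by (intro mult_mono) auto
    finally show ?thesis using that inner_int_pos[of a t] by (intro one_div_sqrt_antimono) auto
  qed
  then have "ennreal (1 / sqrt (f (a + 1)) * (a + 1 - a)) \<le> calR f h a"
    using f_pos[of "a + 1"] by (intro calR_lower_bound_on_interval) auto
  moreover have "0 < ennreal (1 / sqrt (f (a + 1)) * (a + 1 - a))"
    using f_pos[of "a + 1"] by simp
  ultimately show ?thesis by order
qed

lemma calR_infinite_if_bounded: assumes M: "\<And>x. f x \<le> M" shows "calR f h a = \<infinity>"
proof (rule ennreal_eq_top_if_of_nat_le)
  fix n :: nat
  have M_pos: "0 < M" using f_pos[of 0] M[of 0] by linarith
  show "of_nat n \<le> calR f h a"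
  proof (cases "n = 0")
    case False
    \<comment> \<open>On (a, a + M n^2] we have F_a(t) \<le> (M n)^2, so the integrand is at least 1 / (M n).\<close>
    have "1 / (M * n) \<le> 1 / sqrt (F a t)" if "a < t" "t \<le> a + M * n^2" for t
    proof -
      have "F a t \<le> f t * (t - a)" using inner_int_upper[of a t] that by simp
      also have "\<dots> \<le> M * (M * n^2)" using that M[of t] M_pos by (intro mult_mono) auto
      also have "\<dots> = (M * n)^2" by (simp add: power2_eq_square)
      finally have "1 / sqrt ((M * n)^2) \<le> 1 / sqrt (F a t)"
        using that inner_int_pos[of a t] by (intro one_div_sqrt_antimono) auto
      then show ?thesis using M_pos by simp
    qed
    then have "ennreal (1 / (M * n) * (a + M * n^2 - a)) \<le> calR f h a"
      using M_pos by (intro calR_lower_bound_on_interval) auto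
    then show ?thesis using M_pos False by (simp add: power2_eq_square ennreal_of_nat_eq_real_of_nat)
  qed simp
qed

lemma calR_finite_left: assumes ab: "a < b" and fin: "calR f h b < \<infinity>" shows "calR f h a < \<infinity>"
proof -
  \<comment> \<open>On (a, b] the lower bound for F_a gives the integrable majorant (c0 (t - a))^(-1/2).\<close>
  define c0 where "c0 = exp (- 2 * h a * (b - a)) * f a"
  have c0: "c0 > 0" using f_pos[of a] by (simp add: c0_def)
  define g where "g = (\<lambda>t. 1 / sqrt c0 * (t - a) powr (-1/2))"
  have g_finite: "(\<integral>\<^sup>+ t. ennreal (g t) * indicator {a..b} t \<partial>lborel) < \<infinity>"
    unfolding g_def using ab c0 by (intro nn_integral_powr_minus_half_finite) auto
  have integrand_le: "ennreal (1 / sqrt (F a t)) * indicator {a<..} t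
      \<le> ennreal (g t) * indicator {a..b} t + ennreal (1 / sqrt (F b t)) * indicator {b<..} t" for t
  proof (cases "a < t \<and> t \<le> b")
    case True
    have "c0 * (t - a) \<le> exp (- 2 * h a * (t - a)) * f a * (t - a)"
      unfolding c0_def using True h_nonneg[of a] f_pos[of a]
      by (intro mult_right_mono) (auto simp: mult_left_mono)
    also have "\<dots> \<le> F a t" using inner_int_lower[of a t] True by simp
    finally have "1 / sqrt (F a t) \<le> 1 / sqrt (c0 * (t - a))"
      using True c0 by (intro one_div_sqrt_antimono) auto
    also have "\<dots> = g t"
      using True c0 powr_minus_half[of "t - a"] by (simp add: g_def real_sqrt_mult)
    finally show ?thesis using True by (simp add: ennreal_leI)
  next
    case False
    have "1 / sqrt (F a t) \<le> 1 / sqrt (F b t)" if "b < t"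
      using that ab inner_int_pos[of b t] inner_int_antimono_left[of a b t]
      by (intro one_div_sqrt_antimono) auto
    then show ?thesis using False ab by (auto simp: indicator_def intro: ennreal_leI)
  qed
  have "calR f h a \<le> (\<integral>\<^sup>+ t. ennreal (g t) * indicator {a..b} t
      + ennreal (1 / sqrt (F b t)) * indicator {b<..} t \<partial>lborel)"
    unfolding calR_def by (rule nn_integral_mono[OF integrand_le])
  also have "\<dots> = (\<integral>\<^sup>+ t. ennreal (g t) * indicator {a..b} t \<partial>lborel) + calR f h b"
  proof -
    have "(\<lambda>t. ennreal (g t) * indicator {a..b} t) \<in> borel_measurable lborel"
      unfolding g_def by measurable
    moreover have "(\<lambda>t. ennreal (1 / sqrt (F b t)) * indicator {b<..} t) \<in> borel_measurable lborel"
      by measurable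
    ultimately show ?thesis unfolding calR_def by (rule nn_integral_add)
  qed
  also have "\<dots> < \<infinity>" using g_finite fin by simp
  finally show ?thesis .
qed

lemma calR_tendsto_0:
  assumes fin: "calR f h 0 < \<infinity>" and unbounded: "\<And>M. \<exists>x. M < f x"
  shows "(calR f h \<longlongrightarrow> 0) at_top"
proof (rule antimono_tendsto_0_if_INF_nat[OF calR_antimono])
  define u where "u = (\<lambda>(n::nat) \<tau>. ennreal (1 / sqrt (F n (n + \<tau>))) * indicator {0<..} \<tau>)"
  have calR_u: "calR f h n = integral\<^sup>N lborel (u n)" for n
    unfolding calR_shift[OF f_cont h_cont, of "real n"] by (simp add: u_def calR_def inner_int_shift)
  have u_decreasing: "u (Suc n) \<tau> \<le> u n \<tau>" for n \<tau>
  proof (cases "0 < \<tau>")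
    case True
    then have "1 / sqrt (F (Suc n) (Suc n + \<tau>)) \<le> 1 / sqrt (F n (n + \<tau>))"
      using inner_int_pos[of n "n + \<tau>"] inner_int_shift_mono[of n "Suc n" \<tau>]
      by (intro one_div_sqrt_antimono) auto
    then show ?thesis unfolding u_def using True by (simp add: ennreal_leI)
  qed (simp add: u_def)
  have u_measurable: "u n \<in> borel_measurable lborel" for n
    unfolding u_def by measurable
  have u_tendsto_0: "(INF n. u n \<tau>) = 0" for \<tau>
  proof (cases "0 < \<tau>")
    case True
    \<comment> \<open>F_n(n + \<tau>) \<ge> K f(n) with K independent of n, and f(n) \<rightarrow> \<infinity>.\<close>
    define K where "K = exp (- 2 * h 0 * \<tau>) * \<tau>"
    have K: "K > 0" using True by (simp add: K_def)
    have "(INF n. u n \<tau>) \<le> 0"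
    proof (rule ennreal_le_epsilon)
      fix e :: real assume e: "0 < e"
      obtain x where x: "1 / (e^2 * K) < f x" using unbounded by blast
      obtain n :: nat where n: "x < real n" using reals_Archimedean2 by blast
      have "exp (- 2 * h 0 * \<tau>) \<le> exp (- 2 * h n * \<tau>)"
        using True antimonoD[OF h_antimono, of 0 n] by simp
      then have Kf: "K * f n \<le> exp (- 2 * h n * \<tau>) * f n * \<tau>"
        using True f_pos[of n] unfolding K_def
        by (simp add: mult_right_mono mult.commute mult.left_commute)
      have "1 / e^2 = K * (1 / (e^2 * K))" using K e by (simp add: field_simps)
      also have "\<dots> < K * f n"
        using x monoD[OF f_mono, of x n] n K by (intro mult_strict_left_mono) auto
      also have "\<dots> \<le> F n (n + \<tau>)"
        using Kf inner_int_lower[of n "n + \<tau>"] True by simp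
      finally have "1 / sqrt (F n (n + \<tau>)) \<le> 1 / sqrt (1 / e^2)"
        using e by (intro one_div_sqrt_antimono) auto
      then have "u n \<tau> \<le> ennreal e"
        using True e by (simp add: u_def real_sqrt_divide ennreal_leI)
      then show "(INF n. u n \<tau>) \<le> 0 + ennreal e" by (simp add: INF_lower2)
    qed
    then show ?thesis by simp
  qed (simp add: u_def)
  have "(\<integral>\<^sup>+ x. u 0 x \<partial>lborel) < \<infinity>" using fin calR_u[of 0] by simp
  from nn_integral_monotone_convergence_INF_AE'[OF AE_I2[OF u_decreasing] u_measurable this]
  show "(INF n. calR f h (real n)) = 0" by (simp add: calR_u u_tendsto_0)
qed

end

theorem lemma2p4:
  fixes f h :: "real \<Rightarrow> real"
  assumes "continuous_on UNIV f" and "continuous_on UNIV h"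
    and "\<And>x. f x > 0" and "mono f"
    and "\<And>x. h x \<ge> 0" and "antimono h"
  shows "(\<forall>a. calR f h a = \<infinity>) \<or>
         ((\<forall>a. 0 < calR f h a \<and> calR f h a < \<infinity>) \<and> antimono (calR f h) \<and>
          ((calR f h) \<longlongrightarrow> 0) at_top)"
proof -
  interpret calR_hypotheses f h using assms by unfold_locales
  show ?thesis
  proof (cases "\<forall>a. calR f h a = \<infinity>")
    case False
    then obtain a0 where a0: "calR f h a0 < \<infinity>" by (auto simp: top.not_eq_extremum)
    have finite: "calR f h a < \<infinity>" for a
      using a0 calR_finite_left[of a a0] antimonoD[OF calR_antimono, of a0 a]
      by (cases "a0 \<le> a") auto
    have "\<exists>x. M < f x" for M
    proof (rule ccontr)
      assume "\<nexists>x. M < f x"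
      then have "calR f h a0 = \<infinity>" by (intro calR_infinite_if_bounded[of M]) (simp add: not_less)
      with a0 show False by simp
    qed
    then show ?thesis
      using finite calR_pos calR_antimono calR_tendsto_0[OF finite] by blast
  qed blast
qed

end
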